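(* Let $\lambda$ be a nonzero real number. For every integer $n\ge0$ and every real $x$ with $1+\lambda x>0$, \[ \mathrm{Bel}_{n,\lambda}(x)=\sum_{k=0}^{n}(1)_{k,\lambda}\Big(\frac{x}{1+\lambda x}\Big)^{k}S_{2}(n,k). \] In particular, if $1+\lambda>0$, then $\mathrm{Bel}_{n,\lambda}:=\mathrm{Bel}_{n,\lambda}(1)=\sum_{k=0}^{n}(1)_{k,\lambda}\big(\frac{1}{1+\lambda}\big)^{k}S_{2}(n,k)$.
   Context: $(1)_{0,\lambda}=1$, $(1)_{k,\lambda}=1(1-\lambda)\cdots(1-(k-1)\lambda)$ for $k\ge1$. $S_2(n,k)$ are the Stirling numbers of the second kind, defined by $x^n=\sum_{k=0}^nS_2(n,k)(x)_k$ with $(x)_k=x(x-1)\cdots(x-k+1)$. $e_\lambda(x)=(1+\lambda x)^{1/\lambda}$, $e_\lambda^{-1}(x)=(1+\lambda x)^{-1/\lambda}$. The new type degenerate Bell polynomials $\mathrm{Bel}_{n,\lambda}(x)$ are defined by $e_{\lambda}(xe^{t})\,e_{\lambda}^{-1}(x)=\big(\frac{1+\lambda xe^t}{1+\lambda x}\big)^{1/\lambda}=\sum_{n=0}^{\infty}\mathrm{Bel}_{n,\lambda}(x)\frac{t^{n}}{n!}$. *)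

theory Defs
  imports "HOL-Analysis.Analysis" "HOL-Combinatorics.Stirling"
begin

definition deg_fall_one :: "real \<Rightarrow> nat \<Rightarrow> real" where
  "deg_fall_one lam k = (\<Prod>i<k. 1 - real i * lam)"

text \<open>Generating function of the new type degenerate Bell polynomials:
  e_lambda(x e^t) e_lambda^{-1}(x) = ((1 + lambda x e^t)/(1 + lambda x))^(1/lambda).\<close>
definition bel_gf :: "real \<Rightarrow> real \<Rightarrow> real \<Rightarrow> real" where
  "bel_gf lam x t = ((1 + lam * x * exp t) / (1 + lam * x)) powr (1 / lam)"

text \<open>Bel_{n,lambda}(x) = n! times the n-th Taylor coefficient at t = 0 of the generating
  function, i.e. its n-th derivative in t at 0.\<close>
definition Bel :: "nat \<Rightarrow> real \<Rightarrow> real \<Rightarrow> real" where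
  "Bel n lam x = (deriv ^^ n) (bel_gf lam x) 0"

end

theory Submission
  imports Defs
begin

text \<open>With \<open>B(t) = (1 + \<lambda>x e^t)/(1 + \<lambda>x)\<close> and \<open>u = x/(1 + \<lambda>x)\<close> one has
  \<open>B' = \<lambda>u e^t\<close>, so the functions \<open>T_k(t) = (1)_{k,\<lambda>} u^k e^{kt} B(t)^{1/\<lambda> - k}\<close> satisfy
  \<open>T_k' = k T_k + T_{k+1}\<close>, because \<open>(1/\<lambda> - k) \<lambda> = 1 - k\<lambda>\<close>. This is the recurrence of
  \<open>S_2(n,k)\<close>, so starting from the generating function \<open>T_0 = B^{1/\<lambda>}\<close> the \<open>n\<close>-th
  derivative is \<open>\<Sum>_k S_2(n,k) T_k\<close>, and \<open>T_k(0) = (1)_{k,\<lambda>} u^k\<close>.\<close>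

lemma sum_Stirling_Suc:
  fixes T :: "nat \<Rightarrow> 'a::comm_semiring_1"
  shows "(\<Sum>k\<le>n. of_nat (Stirling n k) * (of_nat k * T k + T (Suc k)))
       = (\<Sum>k\<le>Suc n. of_nat (Stirling (Suc n) k) * T k)"
proof -
  have shift: "(\<Sum>k\<le>n. of_nat (Suc k) * of_nat (Stirling n (Suc k)) * T (Suc k))
             = (\<Sum>k\<le>n. of_nat k * of_nat (Stirling n k) * T k)"
  proof -
    have "(\<Sum>k\<le>n. of_nat (Suc k) * of_nat (Stirling n (Suc k)) * T (Suc k))
        = (\<Sum>k\<le>Suc n. of_nat k * of_nat (Stirling n k) * T k)"
      by (subst sum.atMost_Suc_shift) (simp del: of_nat_Suc)
    also have "\<dots> = (\<Sum>k\<le>n. of_nat k * of_nat (Stirling n k) * T k)"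
      by simp
    finally show ?thesis .
  qed
  have "(\<Sum>k\<le>Suc n. of_nat (Stirling (Suc n) k) * T k)
      = (\<Sum>k\<le>n. of_nat (Stirling (Suc n) (Suc k)) * T (Suc k))"
    by (subst sum.atMost_Suc_shift) simp
  also have "\<dots> = (\<Sum>k\<le>n. of_nat (Suc k) * of_nat (Stirling n (Suc k)) * T (Suc k))
                  + (\<Sum>k\<le>n. of_nat (Stirling n k) * T (Suc k))"
    by (simp add: sum.distrib[symmetric] algebra_simps)
  also have "\<dots> = (\<Sum>k\<le>n. of_nat k * of_nat (Stirling n k) * T k)
                  + (\<Sum>k\<le>n. of_nat (Stirling n k) * T (Suc k))"
    by (simp only: shift)
  also have "\<dots> = (\<Sum>k\<le>n. of_nat (Stirling n k) * (of_nat k * T k + T (Suc k)))"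
    by (simp add: sum.distrib algebra_simps)
  finally show ?thesis ..
qed

lemma higher_deriv_eq_Stirling_sum:
  fixes f :: "'a::real_normed_field \<Rightarrow> 'a" and T :: "nat \<Rightarrow> 'a \<Rightarrow> 'a"
  assumes "open S"
    and f: "\<And>t. t \<in> S \<Longrightarrow> f t = T 0 t"
    and T': "\<And>k t. t \<in> S \<Longrightarrow> (T k has_field_derivative (of_nat k * T k t + T (Suc k) t)) (at t)"
    and "t \<in> S"
  shows "(deriv ^^ n) f t = (\<Sum>k\<le>n. of_nat (Stirling n k) * T k t)"
  using \<open>t \<in> S\<close>
proof (induction n arbitrary: t)
  case 0
  then show ?case by (simp add: f)
next
  case (Suc n)
  have "((\<lambda>t. \<Sum>k\<le>n. of_nat (Stirling n k) * T k t) has_field_derivative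
      (\<Sum>k\<le>Suc n. of_nat (Stirling (Suc n) k) * T k t)) (at t)"
    unfolding sum_Stirling_Suc[of n "\<lambda>k. T k t", symmetric]
    by (intro DERIV_sum DERIV_cmult T' Suc.prems)
  then have "((deriv ^^ n) f has_field_derivative
      (\<Sum>k\<le>Suc n. of_nat (Stirling (Suc n) k) * T k t)) (at t)"
    by (rule has_field_derivative_transform_within_open[OF _ \<open>open S\<close> Suc.prems])
       (simp add: Suc.IH)
  then show ?case
    by (simp add: DERIV_imp_deriv)
qed

definition bel_base :: "real \<Rightarrow> real \<Rightarrow> real \<Rightarrow> real" where
  "bel_base lam x t = (1 + lam * x * exp t) / (1 + lam * x)"

definition bel_term :: "real \<Rightarrow> real \<Rightarrow> nat \<Rightarrow> real \<Rightarrow> real" where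
  "bel_term lam x k t = deg_fall_one lam k * (x / (1 + lam * x)) ^ k * exp (real k * t)
      * bel_base lam x t powr (1 / lam - real k)"

lemma bel_term_0: "bel_term lam x 0 t = bel_gf lam x t"
  by (simp add: bel_term_def bel_base_def bel_gf_def deg_fall_one_def)

lemma bel_term_at_0:
  assumes "1 + lam * x \<noteq> 0"
  shows "bel_term lam x k 0 = deg_fall_one lam k * (x / (1 + lam * x)) ^ k"
  using assms by (simp add: bel_term_def bel_base_def)

lemma has_real_derivative_bel_base:
  "(bel_base lam x has_real_derivative lam * (x / (1 + lam * x)) * exp t) (at t)"
  unfolding bel_base_def[abs_def] divide_inverse
  by (auto intro!: derivative_eq_intros)

lemma has_real_derivative_bel_term:
  assumes "lam \<noteq> 0" and "1 + lam * x > 0" and "1 + lam * x * exp t > 0"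
  shows "(bel_term lam x k has_real_derivative
           (real k * bel_term lam x k t + bel_term lam x (Suc k) t)) (at t)"
proof -
  define u where "u = x / (1 + lam * x)"
  define a where "a = 1 / lam - real k"
  have B_pos: "bel_base lam x t > 0"
    using assms by (simp add: bel_base_def)
  have T_k: "bel_term lam x k t = deg_fall_one lam k * u ^ k * exp (real k * t)
      * bel_base lam x t powr a"
    by (simp add: bel_term_def u_def a_def)
  have T_Suc: "bel_term lam x (Suc k) t
      = deg_fall_one lam k * u ^ k * exp (real k * t) * (a * lam) * u * exp t
        * bel_base lam x t powr (a - 1)"
  proof -
    have a_lam: "a * lam = 1 - real k * lam" and a_pred: "a - 1 = 1 / lam - real (Suc k)"
      using \<open>lam \<noteq> 0\<close> by (simp_all add: a_def field_simps)
    have "exp (real (Suc k) * t) = exp (real k * t) * exp t"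
      by (simp add: exp_add[symmetric] algebra_simps)
    then show ?thesis
      unfolding a_lam a_pred by (simp add: bel_term_def deg_fall_one_def u_def mult_ac)
  qed
  have "(bel_term lam x k has_real_derivative
      deg_fall_one lam k * u ^ k * (real k * exp (real k * t) * bel_base lam x t powr a
        + exp (real k * t) * (a * bel_base lam x t powr (a - 1) * (lam * u * exp t)))) (at t)"
    unfolding bel_term_def[abs_def] u_def a_def
    by (auto intro!: derivative_eq_intros has_real_derivative_bel_base simp: B_pos algebra_simps)
  moreover have "real k * bel_term lam x k t + bel_term lam x (Suc k) t
      = deg_fall_one lam k * u ^ k * (real k * exp (real k * t) * bel_base lam x t powr a
        + exp (real k * t) * (a * bel_base lam x t powr (a - 1) * (lam * u * exp t)))"
    unfolding T_k T_Suc by (simp add: algebra_simps)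
  ultimately show ?thesis
    by simp
qed

theorem theorem11:
  fixes lam x :: real and n :: nat
  assumes "lam \<noteq> 0" and "1 + lam * x > 0"
  shows "Bel n lam x = (\<Sum>k\<le>n. deg_fall_one lam k * (x / (1 + lam * x)) ^ k * real (Stirling n k))"
proof -
  let ?S = "{t. 1 + lam * x * exp t > 0}"
  have "open ?S"
    by (intro open_Collect_less continuous_intros)
  then have "Bel n lam x = (\<Sum>k\<le>n. real (Stirling n k) * bel_term lam x k 0)"
    unfolding Bel_def
    by (rule higher_deriv_eq_Stirling_sum)
       (use assms in \<open>auto simp: bel_term_0 intro: has_real_derivative_bel_term\<close>)
  then show ?thesis
    using assms(2) by (simp add: bel_term_at_0 mult.commute)
qed

end
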